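(* Let $r\in\mathcal R$ be a proper distance matrix. Then $r$ is universal if and only if for each $n\in\mathbb N$ the orbit of $r$ under the group $S^n_\infty$ is everywhere dense (in the weak topology) in $\mathcal R^n(p_n(r))$. Moreover, $r$ is weakly universal if and only if its orbit under $S_\infty$ is everywhere dense in $\mathcal R$.
   Context: $\mathcal R$ is the set of infinite real matrices $r=\{r_{i,j}\}_{i,j\ge1}$ with $r_{i,i}=0$, $r_{i,j}\ge0$, $r_{i,j}=r_{j,i}$, $r_{i,k}+r_{k,j}\ge r_{i,j}$, with the weak (entrywise) topology; $\mathcal R_n$ is the analogous set of $n\times n$ matrices; $p_n(r)$ is the upper-left $n\times n$ corner; $r$ is proper if $r_{i,j}>0$ for $i\ne j$. For $q\in\mathcal R_n$, $A(q)=\{a\in\mathbb R^n:|a_i-a_j|\le q_{i,j}\le a_i+a_j\ \forall i,j\}$ and $\mathcal R^n(q)=\{r\in\mathcal R: p_n(r)=q\}$. $S_\infty$ is the group of finite permutations $g$ of $\mathbb N$, acting on $\mathcal R$ by $(gr)_{i,j}=r_{g(i),g(j)}$; $S^n_\infty$ is its subgroup of permutations fixing $1,\dots,n$, which maps each $\mathcal R^n(q)$ into itself. A proper $r$ is universal if for every $n$, $a\in A(p_n(r))$, $\epsilon>0$ there is $m$ with $\max_{i\le n}|r_{i,m}-a_i|<\epsilon$; a proper $r$ is weakly universal if for every $n$ the set of submatrices $\{r_{i_k,i_s}\}_{k,s=1}^n$ over all $n$-tuples of indices is dense in $\mathcal R_n$. *)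

theory Defs
  imports "HOL-Analysis.Analysis"
begin

text \<open>The paper's index i >= 1
  corresponds to index i - 1 here (0-based). The weak (entrywise) topology is the
  product topology, which is the library's topology on function spaces.\<close>

type_synonym imatrix = "nat \<Rightarrow> nat \<Rightarrow> real"

definition dist_matrix :: "imatrix \<Rightarrow> bool" where
  "dist_matrix r \<longleftrightarrow> (\<forall>i. r i i = 0) \<and> (\<forall>i j. r i j \<ge> 0) \<and> (\<forall>i j. r i j = r j i)
     \<and> (\<forall>i j k. r i k + r k j \<ge> r i j)"

definition DM :: "imatrix set" where
  "DM = {r. dist_matrix r}"

text \<open>n x n distance matrices: only entries with indices < n matter.\<close>
definition dist_matrix_n :: "nat \<Rightarrow> imatrix \<Rightarrow> bool" where
  "dist_matrix_n n q \<longleftrightarrow> (\<forall>i<n. q i i = 0) \<and> (\<forall>i<n. \<forall>j<n. q i j \<ge> 0)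
     \<and> (\<forall>i<n. \<forall>j<n. q i j = q j i) \<and> (\<forall>i<n. \<forall>j<n. \<forall>k<n. q i k + q k j \<ge> q i j)"

definition pn :: "nat \<Rightarrow> imatrix \<Rightarrow> imatrix" where
  "pn n r = (\<lambda>i j. if i < n \<and> j < n then r i j else 0)"

definition proper :: "imatrix \<Rightarrow> bool" where
  "proper r \<longleftrightarrow> (\<forall>i j. i \<noteq> j \<longrightarrow> r i j > 0)"

definition A_set :: "nat \<Rightarrow> imatrix \<Rightarrow> (nat \<Rightarrow> real) set" where
  "A_set n q = {a. \<forall>i<n. \<forall>j<n. \<bar>a i - a j\<bar> \<le> q i j \<and> q i j \<le> a i + a j}"

definition fiber :: "nat \<Rightarrow> imatrix \<Rightarrow> imatrix set" where
  "fiber n q = {r \<in> DM. \<forall>i<n. \<forall>j<n. r i j = q i j}"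

definition Sinf :: "(nat \<Rightarrow> nat) set" where
  "Sinf = {g. bij g \<and> finite {i. g i \<noteq> i}}"

definition Sinf_n :: "nat \<Rightarrow> (nat \<Rightarrow> nat) set" where
  "Sinf_n n = {g \<in> Sinf. \<forall>i<n. g i = i}"

definition act :: "(nat \<Rightarrow> nat) \<Rightarrow> imatrix \<Rightarrow> imatrix" where
  "act g r = (\<lambda>i j. r (g i) (g j))"

definition universal :: "imatrix \<Rightarrow> bool" where
  "universal r \<longleftrightarrow> proper r \<and>
     (\<forall>n. \<forall>a \<in> A_set n (pn n r). \<forall>\<epsilon>>0. \<exists>m. \<forall>i<n. \<bar>r i m - a i\<bar> < \<epsilon>)"

text \<open>Density in R_n (a finite-dimensional Euclidean space) written out with the max-norm.\<close>
definition weakly_universal :: "imatrix \<Rightarrow> bool" where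
  "weakly_universal r \<longleftrightarrow> proper r \<and>
     (\<forall>n q. dist_matrix_n n q \<longrightarrow> (\<forall>\<epsilon>>0. \<exists>idx :: nat \<Rightarrow> nat.
        \<forall>k<n. \<forall>s<n. \<bar>r (idx k) (idx s) - q k s\<bar> < \<epsilon>))"

end

(*
  A finite permutation moves finitely many indices, so the orbit closures in the statement are
  about finite corners: s lies in the closure iff every corner of s is approximated by
  r (m i) (m j) for an injective index map m, which a finite permutation then realizes.

  For a universal r such maps are built one index at a time. If m 0, ..., m (K-1) approximate
  the first K points of s, then x \<mapsto> min_i (s i K + 2 e + r x (m i)) is an admissible distance
  vector for r (a Katetov function), so universality provides an index at approximately the
  prescribed distances s i K from the m i. Conversely, density in the fibre applied to the
  one-point extension of p_n(r) by a \<in> A(p_n(r)) is exactly universality.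

  The weak case needs no construction: weak universality approximates every corner directly,
  and adding a constant to the off-diagonal entries first makes the approximating indices distinct.
*)

theory Submission
  imports Defs "HOL-Combinatorics.Permutations"
begin

lemma tendsto_fun_iff:
  fixes f :: "'a \<Rightarrow> 'i \<Rightarrow> 'b::topological_space"
  shows "(f \<longlongrightarrow> l) F \<longleftrightarrow> (\<forall>i. ((\<lambda>x. f x i) \<longlongrightarrow> l i) F)"
  using limitin_componentwise[of "\<lambda>i. euclidean" UNIV f l F]
  by (simp add: euclidean_product_topology)

lemma closure_iff_corner_approx:
  fixes S :: "(nat \<Rightarrow> nat \<Rightarrow> 'a::metric_space) set"
  shows "s \<in> closure S \<longleftrightarrow> (\<forall>N. \<forall>e>0. \<exists>t\<in>S. \<forall>i<N. \<forall>j<N. dist (t i j) (s i j) < e)"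
proof
  assume "s \<in> closure S"
  then obtain t where t: "\<And>k. t k \<in> S" and "t \<longlonglongrightarrow> s"
    by (auto simp: closure_sequential)
  then have entry_lim: "(\<lambda>k. t k i j) \<longlonglongrightarrow> s i j" for i j
    by (simp add: tendsto_fun_iff)
  show "\<forall>N. \<forall>e>0. \<exists>t\<in>S. \<forall>i<N. \<forall>j<N. dist (t i j) (s i j) < e"
  proof (intro allI impI)
    fix N and e :: real
    assume "e > 0"
    then have "\<forall>\<^sub>F k in sequentially. \<forall>i\<in>{..<N}. \<forall>j\<in>{..<N}. dist (t k i j) (s i j) < e"
      using entry_lim by (intro eventually_ball_finite ballI) (auto simp: tendsto_iff)
    then obtain k where "\<forall>i\<in>{..<N}. \<forall>j\<in>{..<N}. dist (t k i j) (s i j) < e"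
      by (auto simp: eventually_sequentially)
    then show "\<exists>t\<in>S. \<forall>i<N. \<forall>j<N. dist (t i j) (s i j) < e"
      using t by auto
  qed
next
  assume approx: "\<forall>N. \<forall>e>0. \<exists>t\<in>S. \<forall>i<N. \<forall>j<N. dist (t i j) (s i j) < e"
  have "\<exists>t\<in>S. \<forall>i<k. \<forall>j<k. dist (t i j) (s i j) < inverse (Suc k)" for k
    using approx by simp
  then obtain t where t: "\<And>k. t k \<in> S"
    and close: "\<And>k i j. i < k \<Longrightarrow> j < k \<Longrightarrow> dist (t k i j) (s i j) < inverse (Suc k)"
    by metis
  have "(\<lambda>k. t k i j) \<longlonglongrightarrow> s i j" for i j
  proof (rule metric_tendsto_imp_tendsto[OF LIMSEQ_inverse_real_of_nat])
    show "\<forall>\<^sub>F k in sequentially. dist (t k i j) (s i j) \<le> dist (inverse (Suc k)) 0"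
      using eventually_gt_at_top[of "max i j"] by eventually_elim (use close in fastforce)
  qed
  then have "t \<longlonglongrightarrow> s"
    by (simp add: tendsto_fun_iff)
  then show "s \<in> closure S"
    using t by (auto simp: closure_sequential)
qed

lemma Sinf_eq_permutations: "Sinf = {p. permutation p}"
  by (auto simp: Sinf_def permutation)

lemma permutation_extending_inj_on:
  assumes "finite A" and inj: "inj_on f A"
  obtains p where "permutation p" and "\<And>x. x \<in> A \<Longrightarrow> p x = f x"
proof -
  define S where "S = A \<union> f ` A"
  have "finite S"
    using \<open>finite A\<close> by (simp add: S_def)
  have "card (S - A) = card (S - f ` A)"
    using \<open>finite A\<close> \<open>finite S\<close> card_image[OF inj] by (simp add: S_def card_Diff_subset)
  then obtain h where h: "bij_betw h (S - A) (S - f ` A)"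
    using \<open>finite S\<close> by (metis finite_Diff finite_same_card_bij)
  define p where "p x = (if x \<in> A then f x else if x \<in> S then h x else x)" for x
  have "bij_betw p A (f ` A)"
    using inj by (auto simp: p_def bij_betw_def inj_on_def)
  moreover have "bij_betw p (S - A) (S - f ` A)"
    using h by (rule bij_betw_cong[THEN iffD1, rotated]) (simp add: p_def)
  ultimately have "bij_betw p (A \<union> (S - A)) (f ` A \<union> (S - f ` A))"
    by (rule bij_betw_combine) blast
  moreover have "A \<union> (S - A) = S" and "f ` A \<union> (S - f ` A) = S"
    by (auto simp: S_def)
  ultimately have "bij_betw p S S"
    by simp
  then have "p permutes S"
    by (rule bij_imp_permutes) (simp add: p_def S_def)
  with \<open>finite S\<close> have "permutation p"
    by (rule permutes_imp_permutation)
  then show thesis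
    by (rule that) (simp add: p_def)
qed

lemma dist_matrix_diag: "dist_matrix r \<Longrightarrow> r i i = 0"
  and dist_matrix_nonneg: "dist_matrix r \<Longrightarrow> r i j \<ge> 0"
  and dist_matrix_sym: "dist_matrix r \<Longrightarrow> r i j = r j i"
  and dist_matrix_triangle: "dist_matrix r \<Longrightarrow> r i k \<le> r i j + r j k"
  unfolding dist_matrix_def by auto

lemma dist_matrix_n_if_dist_matrix: "dist_matrix r \<Longrightarrow> dist_matrix_n n r"
  unfolding dist_matrix_def dist_matrix_n_def by blast

lemma dist_matrix_n_pn_iff: "dist_matrix_n n (pn n r) \<longleftrightarrow> dist_matrix_n n r"
  by (simp add: dist_matrix_n_def pn_def)

lemma dist_matrix_pullback:
  assumes "dist_matrix_n n q" and "\<And>i. f i < n"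
  shows "dist_matrix (\<lambda>i j. q (f i) (f j))"
  using assms unfolding dist_matrix_def dist_matrix_n_def by auto

lemma dist_matrix_plus_discrete:
  assumes "dist_matrix s" and "d \<ge> 0"
  shows "dist_matrix (\<lambda>i j. s i j + (if i = j then 0 else d))"
  using assms unfolding dist_matrix_def by (smt (verit))

definition one_point_extension :: "nat \<Rightarrow> imatrix \<Rightarrow> (nat \<Rightarrow> real) \<Rightarrow> imatrix" where
  "one_point_extension n q a =
     (\<lambda>i j. if i < n \<and> j < n then q i j else if i < n then a i else if j < n then a j else 0)"

lemma dist_matrix_n_one_point_extension:
  assumes q: "dist_matrix_n n q" and a: "a \<in> A_set n q"
  shows "dist_matrix_n (Suc n) (one_point_extension n q a)"
proof -
  have a_nonneg: "a i \<ge> 0" if "i < n" for i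
    using a q that unfolding A_set_def dist_matrix_n_def by force
  have a_lipschitz: "a i \<le> q i k + a k" if "i < n" "k < n" for i k
    using a that unfolding A_set_def by (force simp: abs_le_iff)
  show ?thesis
    using q a a_nonneg a_lipschitz unfolding dist_matrix_n_def A_set_def one_point_extension_def
    by (auto simp: less_Suc_eq abs_le_iff add.commute)
qed

lemma Min_plus_dist_in_A_set:
  fixes r :: imatrix and m :: "nat \<Rightarrow> nat" and c :: "nat \<Rightarrow> real"
  assumes r: "dist_matrix r" and "K > 0"
    and c: "\<And>i j. i < K \<Longrightarrow> j < K \<Longrightarrow> r (m i) (m j) \<le> c i + c j"
  shows "(\<lambda>x. MIN i\<in>{..<K}. c i + r x (m i)) \<in> A_set M (pn M r)"
proof -
  define b where "b x = (MIN i\<in>{..<K}. c i + r x (m i))" for x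
  have b_le: "b x \<le> c i + r x (m i)" if "i < K" for x i
    using that by (simp add: b_def)
  have b_attained: "\<exists>i<K. b x = c i + r x (m i)" for x
    using obtains_MIN[of "{..<K}" "\<lambda>i. c i + r x (m i)"] \<open>K > 0\<close> by (auto simp: b_def)
  note r_sym = dist_matrix_sym[OF r] and r_tri = dist_matrix_triangle[OF r]
  have "\<bar>b x - b y\<bar> \<le> r x y \<and> r x y \<le> b x + b y" for x y
  proof -
    obtain i where i: "i < K" "b x = c i + r x (m i)"
      using b_attained by blast
    obtain j where j: "j < K" "b y = c j + r y (m j)"
      using b_attained by blast
    have "b x \<le> b y + r x y"
      using b_le[OF j(1), of x] j(2) r_tri[of x "m j" y] by linarith
    moreover have "b y \<le> b x + r x y"
      using b_le[OF i(1), of y] i(2) r_tri[of y "m i" x] r_sym[of x y] by linarith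
    moreover have "r x y \<le> r x (m i) + r (m i) (m j) + r y (m j)"
      using r_tri[of x y "m i"] r_tri[of "m i" y "m j"] r_sym[of y "m j"] by linarith
    ultimately show ?thesis
      using c[OF i(1) j(1)] i(2) j(2) by (auto simp: abs_le_iff)
  qed
  then have "b \<in> A_set M (pn M r)"
    by (simp add: A_set_def pn_def)
  then show ?thesis
    by (simp add: b_def[abs_def])
qed

lemma universal_realizes_one_point_extension:
  assumes u: "universal r" and r: "dist_matrix r" and s: "dist_matrix s" and "e > 0"
    and close: "\<And>i j. i < K \<Longrightarrow> j < K \<Longrightarrow> \<bar>r (m i) (m j) - s i j\<bar> < e"
  obtains p where "\<And>i. i < K \<Longrightarrow> s i K < r (m i) p \<and> r (m i) p < s i K + 3 * e"
proof (cases "K = 0")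
  case True
  then show ?thesis
    using that by blast
next
  case False
  \<comment> \<open>The offset \<open>2 * e\<close> keeps the realized distances strictly above \<open>s i K \<ge> 0\<close>, so the
    new index differs from all \<open>m i\<close>.\<close>
  define c where "c i = s i K + 2 * e" for i
  define b where "b x = (MIN i\<in>{..<K}. c i + r x (m i))" for x
  define M where "M = Suc (Max (m ` {..<K}))"
  have m_below_M: "m i < M" if "i < K" for i
    using that by (simp add: M_def le_imp_less_Suc)
  note r0 = dist_matrix_diag[OF r]
  note s_sym = dist_matrix_sym[OF s] and s_tri = dist_matrix_triangle[OF s]
  have "r (m i) (m j) \<le> c i + c j" if "i < K" "j < K" for i j
    using close[OF that] s_tri[of i j K] s_sym[of K j] by (simp add: c_def)
  then have "b \<in> A_set M (pn M r)"
    using Min_plus_dist_in_A_set[OF r] False unfolding b_def[abs_def] by blast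
  then obtain p where p: "\<And>x. x < M \<Longrightarrow> \<bar>r x p - b x\<bar> < e"
    using u \<open>e > 0\<close> unfolding universal_def by blast
  have "s i K < r (m i) p \<and> r (m i) p < s i K + 3 * e" if i: "i < K" for i
  proof -
    have "b (m i) \<le> c i + r (m i) (m i)"
      using i by (simp add: b_def)
    then have "b (m i) \<le> c i"
      using r0 by simp
    moreover obtain j where j: "j < K" "b (m i) = c j + r (m i) (m j)"
      using obtains_MIN[of "{..<K}" "\<lambda>j. c j + r (m i) (m j)"] False by (auto simp: b_def)
    then have "s i K + e < b (m i)"
      using close[OF i j(1)] s_tri[of i K j] by (simp add: c_def)
    ultimately show ?thesis
      using p[OF m_below_M[OF i]] by (simp add: c_def abs_less_iff)
  qed
  then show ?thesis
    by (rule that)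
qed

lemma corner_approx_fun_upd:
  assumes r: "dist_matrix r" and s: "dist_matrix s" and "\<eta> > 0"
    and close: "\<forall>i<K. \<forall>j<K. \<bar>r (m i) (m j) - s i j\<bar> < \<eta>"
    and new_row: "\<forall>i<K. \<bar>r (m i) p - s i K\<bar> < \<eta>"
  shows "\<forall>i<Suc K. \<forall>j<Suc K. \<bar>r ((m(K := p)) i) ((m(K := p)) j) - s i j\<bar> < \<eta>"
proof (intro allI impI)
  fix i j
  assume "i < Suc K" "j < Suc K"
  then consider "i < K" "j < K" | "i < K" "j = K" | "i = K" "j < K" | "i = K" "j = K"
    by linarith
  then show "\<bar>r ((m(K := p)) i) ((m(K := p)) j) - s i j\<bar> < \<eta>"
  proof cases
    case 1
    then show ?thesis
      using close by simp
  next
    case 2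
    then show ?thesis
      using new_row by simp
  next
    case 3
    then show ?thesis
      using new_row dist_matrix_sym[OF r, of p "m j"] dist_matrix_sym[OF s, of K j] by simp
  next
    case 4
    then show ?thesis
      using dist_matrix_diag[OF r] dist_matrix_diag[OF s] \<open>\<eta> > 0\<close> by simp
  qed
qed

lemma universal_embeds_fiber_corner:
  assumes u: "universal r" and r: "dist_matrix r" and s: "dist_matrix s"
    and agree: "\<And>i j. i < n \<Longrightarrow> j < n \<Longrightarrow> s i j = r i j"
    and "n \<le> K" and "\<eta> > 0"
  shows "\<exists>m. inj_on m {..<K} \<and> (\<forall>k<n. m k = k) \<and>
           (\<forall>i<K. \<forall>j<K. \<bar>r (m i) (m j) - s i j\<bar> < \<eta>)"
  using \<open>n \<le> K\<close> \<open>\<eta> > 0\<close>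
proof (induction K arbitrary: \<eta> rule: dec_induct)
  case base
  then show ?case
    using agree by (intro exI[of _ id]) auto
next
  case (step K)
  then have "\<eta> / 3 > 0"
    by simp
  then obtain m where inj: "inj_on m {..<K}" and fixes_n: "\<forall>k<n. m k = k"
    and close: "\<forall>i<K. \<forall>j<K. \<bar>r (m i) (m j) - s i j\<bar> < \<eta> / 3"
    using step.IH by blast
  obtain p where p: "\<And>i. i < K \<Longrightarrow> s i K < r (m i) p \<and> r (m i) p < s i K + 3 * (\<eta> / 3)"
    using universal_realizes_one_point_extension[OF u r s \<open>\<eta> / 3 > 0\<close>] close by blast
  have "p \<noteq> m k" if "k < K" for k
    using p[OF that] dist_matrix_nonneg[OF s, of k K] dist_matrix_diag[OF r, of p] by auto
  then have "p \<notin> m ` {..<K}"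
    by auto
  with inj have "inj_on (m(K := p)) {..<Suc K}"
    by (simp add: lessThan_Suc inj_on_fun_updI)
  moreover have "\<forall>k<n. (m(K := p)) k = k"
    using fixes_n step.hyps(1) by simp
  moreover have "\<forall>i<Suc K. \<forall>j<Suc K. \<bar>r ((m(K := p)) i) ((m(K := p)) j) - s i j\<bar> < \<eta>"
  proof (rule corner_approx_fun_upd[OF r s \<open>\<eta> > 0\<close>])
    show "\<forall>i<K. \<forall>j<K. \<bar>r (m i) (m j) - s i j\<bar> < \<eta>"
      using close \<open>\<eta> > 0\<close> by fastforce
    show "\<forall>i<K. \<bar>r (m i) p - s i K\<bar> < \<eta>"
      using p \<open>\<eta> > 0\<close> by (force simp: abs_less_iff)
  qed
  ultimately show ?case
    by blast
qed

lemma closure_orbit_if_inj_corner_approx: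
  assumes approx: "\<And>K e. n \<le> K \<Longrightarrow> e > 0 \<Longrightarrow> \<exists>m. inj_on m {..<K} \<and> (\<forall>k<n. m k = k) \<and>
                      (\<forall>i<K. \<forall>j<K. \<bar>r (m i) (m j) - s i j\<bar> < e)"
  shows "s \<in> closure ((\<lambda>g. act g r) ` Sinf_n n)"
  unfolding closure_iff_corner_approx dist_real_def
proof (intro allI impI)
  fix N and e :: real
  assume "e > 0"
  define K where "K = max N n"
  have "n \<le> K" and "N \<le> K"
    by (simp_all add: K_def)
  then obtain m where inj: "inj_on m {..<K}" and fixes_n: "\<forall>k<n. m k = k"
    and close: "\<forall>i<K. \<forall>j<K. \<bar>r (m i) (m j) - s i j\<bar> < e"
    using approx \<open>e > 0\<close> by blast
  obtain g where "permutation g" and g_m: "\<And>k. k \<in> {..<K} \<Longrightarrow> g k = m k"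
    using permutation_extending_inj_on[OF finite_lessThan inj] by blast
  have "g \<in> Sinf_n n"
    using \<open>permutation g\<close> g_m fixes_n \<open>n \<le> K\<close> by (auto simp: Sinf_n_def Sinf_eq_permutations)
  moreover have "\<forall>i<N. \<forall>j<N. \<bar>act g r i j - s i j\<bar> < e"
    using close g_m \<open>N \<le> K\<close> by (auto simp: act_def)
  ultimately show "\<exists>t\<in>(\<lambda>g. act g r) ` Sinf_n n. \<forall>i<N. \<forall>j<N. \<bar>t i j - s i j\<bar> < e"
    by blast
qed

lemma fiber_subset_closure_if_universal:
  assumes u: "universal r" and r: "dist_matrix r"
  shows "fiber n (pn n r) \<subseteq> closure ((\<lambda>g. act g r) ` Sinf_n n)"
proof
  fix s
  assume "s \<in> fiber n (pn n r)"
  then have s: "dist_matrix s" and agree: "\<And>i j. i < n \<Longrightarrow> j < n \<Longrightarrow> s i j = r i j"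
    by (auto simp: fiber_def DM_def pn_def)
  show "s \<in> closure ((\<lambda>g. act g r) ` Sinf_n n)"
    using universal_embeds_fiber_corner[OF u r s agree]
    by (rule closure_orbit_if_inj_corner_approx)
qed

lemma universal_if_fiber_subset_closure:
  assumes r: "dist_matrix r" and "proper r"
    and dense: "\<And>n. fiber n (pn n r) \<subseteq> closure ((\<lambda>g. act g r) ` Sinf_n n)"
  shows "universal r"
  unfolding universal_def
proof (intro conjI allI ballI impI \<open>proper r\<close>)
  fix n a and e :: real
  assume a: "a \<in> A_set n (pn n r)" and "e > 0"
  have extension: "dist_matrix_n (Suc n) (one_point_extension n (pn n r) a)"
    using dist_matrix_n_one_point_extension[OF _ a] r
    by (simp add: dist_matrix_n_pn_iff dist_matrix_n_if_dist_matrix)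
  define s where "s i j = one_point_extension n (pn n r) a (min i n) (min j n)" for i j
  have "dist_matrix s"
    unfolding s_def by (rule dist_matrix_pullback[OF extension]) simp
  moreover have s_corner: "s i j = r i j" if "i < n" "j < n" for i j
    using that by (simp add: s_def one_point_extension_def pn_def)
  ultimately have "s \<in> fiber n (pn n r)"
    by (simp add: fiber_def DM_def pn_def)
  then have "s \<in> closure ((\<lambda>g. act g r) ` Sinf_n n)"
    using dense by blast
  then have "\<forall>N. \<forall>e>0. \<exists>t\<in>(\<lambda>g. act g r) ` Sinf_n n. \<forall>i<N. \<forall>j<N. \<bar>t i j - s i j\<bar> < e"
    by (simp only: closure_iff_corner_approx dist_real_def)
  then obtain g where g: "g \<in> Sinf_n n" and close: "\<forall>i<Suc n. \<forall>j<Suc n. \<bar>act g r i j - s i j\<bar> < e"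
    using \<open>e > 0\<close> by blast
  have "\<bar>r i (g n) - a i\<bar> < e" if "i < n" for i
  proof -
    have "\<bar>act g r i n - s i n\<bar> < e"
      using close that by simp
    moreover have "g i = i"
      using g that by (simp add: Sinf_n_def)
    moreover have "s i n = a i"
      using that by (simp add: s_def one_point_extension_def)
    ultimately show ?thesis
      by (simp add: act_def)
  qed
  then show "\<exists>m. \<forall>i<n. \<bar>r i m - a i\<bar> < e"
    by blast
qed

lemma weakly_universal_inj_corner_approx:
  assumes w: "weakly_universal r" and r: "dist_matrix r" and s: "dist_matrix s" and "e > 0"
  obtains m where "inj_on m {..<N}" and "\<forall>i<N. \<forall>j<N. \<bar>r (m i) (m j) - s i j\<bar> < e"
proof -
  \<comment> \<open>Separating distinct points by \<open>e / 2\<close> forces an \<open>e / 2\<close>-approximation to use distinct indices.\<close>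
  define s' where "s' i j = s i j + (if i = j then 0 else e / 2)" for i j
  have "dist_matrix s'"
    using dist_matrix_plus_discrete[OF s, of "e / 2"] \<open>e > 0\<close> by (simp add: s'_def[abs_def])
  then have "dist_matrix_n N s'"
    by (rule dist_matrix_n_if_dist_matrix)
  moreover have "e / 2 > 0"
    using \<open>e > 0\<close> by simp
  ultimately obtain m where close: "\<forall>i<N. \<forall>j<N. \<bar>r (m i) (m j) - s' i j\<bar> < e / 2"
    using w unfolding weakly_universal_def by blast
  have "inj_on m {..<N}"
  proof (rule inj_onI, rule ccontr)
    fix k l
    assume "k \<in> {..<N}" "l \<in> {..<N}" "m k = m l" "k \<noteq> l"
    then have "\<bar>r (m k) (m l) - s' k l\<bar> < e / 2"
      using close by blast
    moreover have "r (m k) (m l) = 0"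
      using \<open>m k = m l\<close> dist_matrix_diag[OF r] by simp
    moreover have "s' k l \<ge> e / 2"
      using \<open>k \<noteq> l\<close> dist_matrix_nonneg[OF s, of k l] by (simp add: s'_def)
    ultimately show False
      by linarith
  qed
  moreover have "\<bar>r (m i) (m j) - s i j\<bar> < e" if "i < N" "j < N" for i j
  proof -
    have "\<bar>r (m i) (m j) - s' i j\<bar> < e / 2"
      using close that by blast
    moreover have "\<bar>s' i j - s i j\<bar> \<le> e / 2"
      using \<open>e > 0\<close> by (simp add: s'_def)
    ultimately show ?thesis
      by arith
  qed
  ultimately show thesis
    using that by blast
qed

lemma DM_subset_closure_if_weakly_universal:
  assumes w: "weakly_universal r" and r: "dist_matrix r"
  shows "DM \<subseteq> closure ((\<lambda>g. act g r) ` Sinf)"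
proof
  fix s
  assume "s \<in> DM"
  then have "\<exists>m. inj_on m {..<K} \<and> (\<forall>k<0. m k = k) \<and> (\<forall>i<K. \<forall>j<K. \<bar>r (m i) (m j) - s i j\<bar> < e)"
    if "e > 0" for K e
    using weakly_universal_inj_corner_approx[OF w r _ that] by (simp add: DM_def) blast
  then have "s \<in> closure ((\<lambda>g. act g r) ` Sinf_n 0)"
    by (rule closure_orbit_if_inj_corner_approx)
  then show "s \<in> closure ((\<lambda>g. act g r) ` Sinf)"
    by (simp add: Sinf_n_def)
qed

lemma weakly_universal_if_DM_subset_closure:
  assumes "proper r" and dense: "DM \<subseteq> closure ((\<lambda>g. act g r) ` Sinf)"
  shows "weakly_universal r"
  unfolding weakly_universal_def
proof (intro conjI allI impI \<open>proper r\<close>)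
  fix n q and e :: real
  assume q: "dist_matrix_n n q" and "e > 0"
  show "\<exists>idx. \<forall>k<n. \<forall>l<n. \<bar>r (idx k) (idx l) - q k l\<bar> < e"
  proof (cases "n = 0")
    case True
    then show ?thesis
      by simp
  next
    case False
    define s where "s i j = q (min i (n - 1)) (min j (n - 1))" for i j
    have "s \<in> DM"
      using dist_matrix_pullback[OF q, of "\<lambda>i. min i (n - 1)"] False
      by (simp add: DM_def s_def[abs_def])
    then have "s \<in> closure ((\<lambda>g. act g r) ` Sinf)"
      using dense by blast
    then have "\<forall>N. \<forall>e>0. \<exists>t\<in>(\<lambda>g. act g r) ` Sinf. \<forall>i<N. \<forall>j<N. \<bar>t i j - s i j\<bar> < e"
      by (simp only: closure_iff_corner_approx dist_real_def)
    then obtain g where "\<forall>i<n. \<forall>j<n. \<bar>act g r i j - s i j\<bar> < e"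
      using \<open>e > 0\<close> by blast
    then show ?thesis
      by (auto simp: act_def s_def)
  qed
qed

theorem mainTheorem11:
  fixes r :: imatrix
  assumes "dist_matrix r" and "proper r"
  shows "(universal r \<longleftrightarrow>
            (\<forall>n. fiber n (pn n r) \<subseteq> closure ((\<lambda>g. act g r) ` Sinf_n n)))
       \<and> (weakly_universal r \<longleftrightarrow> DM \<subseteq> closure ((\<lambda>g. act g r) ` Sinf))"
proof (intro conjI iffI)
  show "\<forall>n. fiber n (pn n r) \<subseteq> closure ((\<lambda>g. act g r) ` Sinf_n n)" if "universal r"
    using fiber_subset_closure_if_universal[OF that assms(1)] by blast
  show "universal r" if "\<forall>n. fiber n (pn n r) \<subseteq> closure ((\<lambda>g. act g r) ` Sinf_n n)"
    using universal_if_fiber_subset_closure[OF assms] that by blast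
  show "DM \<subseteq> closure ((\<lambda>g. act g r) ` Sinf)" if "weakly_universal r"
    using DM_subset_closure_if_weakly_universal[OF that assms(1)] .
  show "weakly_universal r" if "DM \<subseteq> closure ((\<lambda>g. act g r) ` Sinf)"
    using weakly_universal_if_DM_subset_closure[OF assms(2) that] .
qed

end
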